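(* Let $(X,\mathcal{F})$ be the game hypergraph constructed from a 3SAT formula $\varphi$ as described in the context, and consider the strict Avoider-Enforcer game on it in which Enforcer moves first. Consider the restricted game in which both players may only make moves respecting the following order within every box $i$: $a_i$ is claimed before both $x_i$ and $\overline{x_i}$, and $s_i$ is claimed after both $x_i$ and $\overline{x_i}$ (i.e. $x_i$ and $\overline{x_i}$ may only be claimed once $a_i$ is claimed, and $s_i$ only once $x_i$ and $\overline{x_i}$ are claimed). Then Avoider has a winning strategy in the restricted game if and only if she has a winning strategy in the unrestricted game; that is, the outcome of the game is unchanged.
   Context: A (strict) Avoider-Enforcer game is given by a finite board $X$ and a family $\mathcal{F}$ of losing sets; Avoider and Enforcer alternately claim one unclaimed element of $X$ per move until all of $X$ is claimed; Enforcer wins iff Avoider has claimed all elements of some $f\in\mathcal{F}$. Construction from a 3SAT formula $\varphi$ on variables $x_1,\dots,x_n$ (each clause having exactly three literals on three distinct variables): the board is $X=\bigcup_{i=1}^n\{a_i,s_i,x_i,\overline{x_i}\}$, consisting of $4n$ distinct vertices; the set $B_i=\{a_i,s_i,x_i,\overline{x_i}\}$ is called box $i$. The vertices $x_i,\overline{x_i}$ are identified with the literals $x_i,\overline{x_i}$ of $\varphi$. The family $\mathcal{F}$ consists of (1) for each $i$, all four 3-element subsets of $B_i$; and (2) for each clause $C=\ell_i\lor\ell_j\lor\ell_k$ of $\varphi$, where $\ell_h\in\{x_h,\overline{x_h}\}$ for $h=i,j,k$, the set $L_C=\{s_i,s_j,s_k,\overline{\ell_i},\overline{\ell_j},\overline{\ell_k}\}$,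 where $\overline{\ell}$ denotes the negation of literal $\ell$ (with $\overline{\overline{x_h}}=x_h$). *)

theory Defs
  imports Main
begin

text \<open>A position is given by the set Av of elements claimed by Avoider, the set En of
elements claimed by Enforcer, and a flag telling whose turn it is (True = Avoider).
Since the board is finite, the least fixed point below characterises exactly the
positions from which Avoider has a winning strategy.\<close>

inductive avoider_wins ::
  "('v set \<Rightarrow> 'v \<Rightarrow> bool) \<Rightarrow> 'v set \<Rightarrow> 'v set set \<Rightarrow> 'v set \<Rightarrow> 'v set \<Rightarrow> bool \<Rightarrow> bool"
  for legal :: "'v set \<Rightarrow> 'v \<Rightarrow> bool" and X :: "'v set" and F :: "'v set set"
where
  terminal: "\<not> (\<exists>v\<in>X - (Av \<union> En). legal (Av \<union> En) v) \<Longrightarrow> \<not> (\<exists>f\<in>F. f \<subseteq> Av)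
      \<Longrightarrow> avoider_wins legal X F Av En t"
| avoider_move: "v \<in> X - (Av \<union> En) \<Longrightarrow> legal (Av \<union> En) v
      \<Longrightarrow> avoider_wins legal X F (insert v Av) En False
      \<Longrightarrow> avoider_wins legal X F Av En True"
| enforcer_move: "\<exists>v\<in>X - (Av \<union> En). legal (Av \<union> En) v
      \<Longrightarrow> (\<forall>v\<in>X - (Av \<union> En). legal (Av \<union> En) v \<longrightarrow> avoider_wins legal X F Av (insert v En) True)
      \<Longrightarrow> avoider_wins legal X F Av En False"

definition avoider_wins_enforcer_first :: "('v set \<Rightarrow> 'v \<Rightarrow> bool) \<Rightarrow> 'v set \<Rightarrow> 'v set set \<Rightarrow> bool" where
  "avoider_wins_enforcer_first legal X F \<longleftrightarrow> avoider_wins legal X F {} {} False"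

definition unrestricted :: "'v set \<Rightarrow> 'v \<Rightarrow> bool" where
  "unrestricted C v \<longleftrightarrow> True"

text \<open>Variables are x_0, ..., x_(n-1). A literal is a pair (i, b): (i, True) is x_i,
(i, False) is its negation. A clause is a triple of literals on three distinct variables.\<close>

type_synonym literal = "nat \<times> bool"
type_synonym clause = "literal \<times> literal \<times> literal"

datatype vtx = A nat | S nat | Pos nat | Neg nat

definition wf_3sat :: "nat \<Rightarrow> clause list \<Rightarrow> bool" where
  "wf_3sat n phi \<longleftrightarrow> (\<forall>((i,bi),(j,bj),(k,bk)) \<in> set phi.
      i < n \<and> j < n \<and> k < n \<and> i \<noteq> j \<and> i \<noteq> k \<and> j \<noteq> k)"

fun lit_vtx :: "literal \<Rightarrow> vtx" where
  "lit_vtx (i, b) = (if b then Pos i else Neg i)"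

fun neg_lit :: "literal \<Rightarrow> literal" where
  "neg_lit (i, b) = (i, \<not> b)"

definition box :: "nat \<Rightarrow> vtx set" where
  "box i = {A i, S i, Pos i, Neg i}"

definition board :: "nat \<Rightarrow> vtx set" where
  "board n = (\<Union>i<n. box i)"

fun clause_set :: "clause \<Rightarrow> vtx set" where
  "clause_set ((i,bi),(j,bj),(k,bk)) =
     {S i, S j, S k, lit_vtx (neg_lit (i,bi)), lit_vtx (neg_lit (j,bj)), lit_vtx (neg_lit (k,bk))}"

definition losing_sets :: "nat \<Rightarrow> clause list \<Rightarrow> vtx set set" where
  "losing_sets n phi =
     (\<Union>i<n. {B. B \<subseteq> box i \<and> card B = 3}) \<union> clause_set ` set phi"

definition restricted :: "vtx set \<Rightarrow> vtx \<Rightarrow> bool" where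
  "restricted C v \<longleftrightarrow>
     (\<forall>i. (v = Pos i \<or> v = Neg i) \<longrightarrow> A i \<in> C) \<and>
     (\<forall>i. v = S i \<longrightarrow> Pos i \<in> C \<and> Neg i \<in> C)"

end

theory Submission
  imports Defs
begin

text \<open>In both games Avoider wins exactly when the formula is satisfiable. Given a satisfying
assignment, Avoider answers every Enforcer move inside the same box, pairing \<open>a\<^sub>i\<close> with the
literal vertex that is true and \<open>s\<^sub>i\<close> with the one that is false. The pairing respects the move
order, gives Avoider at most two vertices per box, and never both \<open>s\<^sub>i\<close> and the false literal
vertex, which she would need to complete the losing set of a satisfied clause.

For an unsatisfiable formula Enforcer, using ordered moves only, opens untouched boxes one at a
time by claiming \<open>a\<^sub>i\<close>. Either Avoider settles the box by taking \<open>s\<^sub>i\<close> and a literal vertex, or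
Enforcer obtains three vertices of it. If all boxes get settled, Avoider's literal vertices define
an assignment, and she owns the losing set of a clause it falsifies. Otherwise, at the end both
players own \<open>2n\<close> vertices and Avoider at most one in Enforcer's box, so she owns three vertices
of some other box.\<close>

subsection \<open>Two strategy principles for strict Avoider-Enforcer games\<close>

definition paired :: "('v \<Rightarrow> 'v) \<Rightarrow> 'v set \<Rightarrow> 'v set \<Rightarrow> 'v set \<Rightarrow> bool" where
  "paired p X Av En \<longleftrightarrow> Av \<union> En \<subseteq> X \<and> Av \<inter> En = {} \<and> p ` Av \<subseteq> En \<and> p ` En \<subseteq> Av"

lemma pairing_strategy_avoider_wins:
  assumes "finite X"
    and partner_in: "\<And>v. v \<in> X \<Longrightarrow> p v \<in> X"
    and partner_inv: "\<And>v. p (p v) = v"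
    and partner_neq: "\<And>v. p v \<noteq> v"
    and partner_legal: "\<And>C v. p ` C \<subseteq> C \<Longrightarrow> v \<notin> C \<Longrightarrow> legal C v \<Longrightarrow> legal (insert v C) (p v)"
    and paired_safe: "\<And>Av En. paired p X Av En \<Longrightarrow> \<not> (\<exists>f\<in>F. f \<subseteq> Av)"
  shows "paired p X Av En \<Longrightarrow> avoider_wins legal X F Av En False"
proof (induction "card (X - (Av \<union> En))" arbitrary: Av En rule: less_induct)
  case less
  let ?C = "Av \<union> En"
  have closed: "p ` ?C \<subseteq> ?C"
    using less.prems unfolding paired_def by blast
  show ?case
  proof (cases "\<exists>v\<in>X - ?C. legal ?C v")
    case False
    then show ?thesis
      using paired_safe[OF less.prems] by (rule avoider_wins.terminal)
  next
    case True
    show ?thesis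
    proof (rule avoider_wins.enforcer_move)
      show "\<exists>v\<in>X - ?C. legal ?C v"
        by (fact True)
      show "\<forall>v\<in>X - ?C. legal ?C v \<longrightarrow> avoider_wins legal X F Av (insert v En) True"
      proof (intro ballI impI)
        fix v assume v: "v \<in> X - ?C" and legal_v: "legal ?C v"
        have pv: "p v \<in> X - insert v ?C"
          using v closed partner_in partner_inv partner_neq
          by (metis DiffE DiffI image_subset_iff insertE)
        have "paired p X (insert (p v) Av) (insert v En)"
          using less.prems v pv partner_inv unfolding paired_def by auto
        moreover have "card (X - (insert (p v) Av \<union> insert v En)) < card (X - ?C)"
          using v \<open>finite X\<close> by (intro psubset_card_mono) auto
        ultimately have "avoider_wins legal X F (insert (p v) Av) (insert v En) False"
          using less.hyps by blast
        moreover have "legal (Av \<union> insert v En) (p v)"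
          using partner_legal[OF closed _ legal_v] v by simp
        ultimately show "avoider_wins legal X F Av (insert v En) True"
          using pv by (intro avoider_wins.avoider_move[of "p v"]) auto
      qed
    qed
  qed
qed

lemma invariant_strategy_avoider_loses:
  assumes stuck_loses: "\<And>Av En t. I Av En t \<Longrightarrow> \<not> (\<exists>v\<in>X - (Av \<union> En). legal (Av \<union> En) v)
      \<Longrightarrow> \<exists>f\<in>F. f \<subseteq> Av"
    and avoider_step: "\<And>Av En v. I Av En True \<Longrightarrow> v \<in> X - (Av \<union> En) \<Longrightarrow> I (insert v Av) En False"
    and enforcer_step: "\<And>Av En. I Av En False \<Longrightarrow> \<exists>v\<in>X - (Av \<union> En). legal (Av \<union> En) v
      \<Longrightarrow> \<exists>v\<in>X - (Av \<union> En). legal (Av \<union> En) v \<and> I Av (insert v En) True"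
  shows "avoider_wins legal X F Av En t \<Longrightarrow> I Av En t \<Longrightarrow> False"
proof (induction rule: avoider_wins.induct)
  case (terminal Av En t)
  then show False using stuck_loses by blast
next
  case (avoider_move v Av En)
  then show False using avoider_step by blast
next
  case (enforcer_move Av En)
  then show False using enforcer_step by blast
qed

fun idx :: "vtx \<Rightarrow> nat" where
  "idx (A i) = i" | "idx (S i) = i" | "idx (Pos i) = i" | "idx (Neg i) = i"

lemma in_box_iff: "v \<in> box i \<longleftrightarrow> idx v = i"
  by (cases v) (auto simp: box_def)

lemma in_board_iff: "v \<in> board n \<longleftrightarrow> idx v < n"
  by (auto simp: board_def in_box_iff)

lemma finite_box [simp]: "finite (box i)"
  by (simp add: box_def)

lemma finite_board [simp]: "finite (board n)"
  by (simp add: board_def)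

lemma card_box: "card (box i) = 4"
  by (simp add: box_def)

lemma card_eq_sum_card_box:
  assumes "V \<subseteq> board n"
  shows "card V = (\<Sum>j<n. card (V \<inter> box j))"
proof -
  have "V = (\<Union>j<n. V \<inter> box j)"
    using assms by (auto simp: board_def)
  also have "card \<dots> = (\<Sum>j<n. card (V \<inter> box j))"
    by (rule card_UN_disjoint) (auto simp: in_box_iff)
  finally show ?thesis .
qed

lemma card_board: "card (board n) = 4 * n"
  using card_eq_sum_card_box[of "board n" n]
  by (simp add: Int_absorb1 board_def card_box UN_upper)

lemma restricted_mono: "restricted C v \<Longrightarrow> C \<subseteq> D \<Longrightarrow> restricted D v"
  unfolding restricted_def by blast

lemma exists_restricted_move:
  assumes "v \<in> board n - C"
  shows "\<exists>w\<in>board n - C. restricted C w"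
proof -
  let ?i = "idx v"
  have "A ?i \<in> board n" "Pos ?i \<in> board n" "Neg ?i \<in> board n"
    using assms by (auto simp: in_board_iff)
  moreover have "v = S ?i" if "A ?i \<in> C" "Pos ?i \<in> C" "Neg ?i \<in> C"
    using assms that by (cases v) auto
  ultimately show ?thesis
    using assms unfolding restricted_def by (cases "A ?i \<in> C"; cases "Pos ?i \<in> C"; cases "Neg ?i \<in> C") force+
qed

subsection \<open>Avoider's pairing strategy for a satisfiable formula\<close>

fun clause_sat :: "(nat \<Rightarrow> bool) \<Rightarrow> clause \<Rightarrow> bool" where
  "clause_sat \<sigma> ((i,bi),(j,bj),(k,bk)) \<longleftrightarrow> \<sigma> i = bi \<or> \<sigma> j = bj \<or> \<sigma> k = bk"

definition satisfiable :: "clause list \<Rightarrow> bool" where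
  "satisfiable phi \<longleftrightarrow> (\<exists>\<sigma>. \<forall>c\<in>set phi. clause_sat \<sigma> c)"

fun partner :: "(nat \<Rightarrow> bool) \<Rightarrow> vtx \<Rightarrow> vtx" where
  "partner \<sigma> (A i) = (if \<sigma> i then Pos i else Neg i)"
| "partner \<sigma> (S i) = (if \<sigma> i then Neg i else Pos i)"
| "partner \<sigma> (Pos i) = (if \<sigma> i then A i else S i)"
| "partner \<sigma> (Neg i) = (if \<sigma> i then S i else A i)"

lemma partner_partner [simp]: "partner \<sigma> (partner \<sigma> v) = v"
  by (cases v) auto

lemma partner_neq: "partner \<sigma> v \<noteq> v"
  by (cases v) auto

lemma idx_partner [simp]: "idx (partner \<sigma> v) = idx v"
  by (cases v) auto

lemma restricted_partner:
  assumes closed: "partner \<sigma> ` C \<subseteq> C" and "v \<notin> C" and "restricted C v"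
  shows "restricted (insert v C) (partner \<sigma> v)"
proof (cases v)
  case (S i)
  with \<open>restricted C v\<close> have "partner \<sigma> v \<in> C"
    by (auto simp: restricted_def)
  then have "v \<in> C"
    using closed by (metis image_subset_iff partner_partner)
  with \<open>v \<notin> C\<close> show ?thesis by simp
next
  case (Pos i)
  with \<open>restricted C v\<close> have "A i \<in> C" "partner \<sigma> (A i) \<in> C"
    using closed by (auto simp: restricted_def)
  with Pos \<open>v \<notin> C\<close> show ?thesis
    by (cases "\<sigma> i") (auto simp: restricted_def)
next
  case (Neg i)
  with \<open>restricted C v\<close> have "A i \<in> C" "partner \<sigma> (A i) \<in> C"
    using closed by (auto simp: restricted_def)
  with Neg \<open>v \<notin> C\<close> show ?thesis
    by (cases "\<sigma> i") (auto simp: restricted_def)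
qed (auto simp: restricted_def)

lemma paired_partner_avoids_losing_sets:
  assumes "paired (partner \<sigma>) (board n) Av En" and "\<forall>c\<in>set phi. clause_sat \<sigma> c"
  shows "\<not> (\<exists>f\<in>losing_sets n phi. f \<subseteq> Av)"
proof
  have partner_notin: "partner \<sigma> x \<notin> Av" if "x \<in> Av" for x
    using assms(1) that unfolding paired_def by blast
  assume "\<exists>f\<in>losing_sets n phi. f \<subseteq> Av"
  then obtain f where f: "f \<in> losing_sets n phi" "f \<subseteq> Av" by blast
  show False
  proof (cases "f \<in> clause_set ` set phi")
    case True
    then obtain c where c: "c \<in> set phi" and f_eq: "f = clause_set c"
      by blast
    obtain i bi j bj k bk where c_eq: "c = ((i,bi),(j,bj),(k,bk))"
      by (cases c) auto
    have "clause_sat \<sigma> c"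
      using assms(2) c by blast
    then have "\<exists>l\<in>{i,j,k}. S l \<in> f \<and> partner \<sigma> (S l) \<in> f"
      unfolding f_eq c_eq by auto
    then show False
      using partner_notin f(2) by blast
  next
    case False
    then obtain i where "f \<subseteq> box i" "card f = 3"
      using f(1) unfolding losing_sets_def by blast
    let ?u = "if A i \<in> Av then A i else partner \<sigma> (A i)"
    let ?w = "if S i \<in> Av then S i else partner \<sigma> (S i)"
    have "Av \<inter> box i \<subseteq> {?u, ?w}"
    proof
      fix x assume x: "x \<in> Av \<inter> box i"
      then have "x \<in> {A i, S i, Pos i, Neg i}"
        by (simp add: box_def)
      with x show "x \<in> {?u, ?w}"
        using partner_notin[of x] by (cases "\<sigma> i") auto
    qed
    then have "card f \<le> card {?u, ?w}"
      using \<open>f \<subseteq> box i\<close> f(2) by (intro card_mono) auto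
    also have "\<dots> \<le> 2"
      by (simp add: card_insert_le_m1)
    finally have "card f \<le> 2" .
    with \<open>card f = 3\<close> show False by simp
  qed
qed

lemma avoider_wins_if_satisfiable:
  assumes legal: "legal = restricted \<or> legal = unrestricted" and "satisfiable phi"
  shows "avoider_wins_enforcer_first legal (board n) (losing_sets n phi)"
proof -
  obtain \<sigma> where sat: "\<forall>c\<in>set phi. clause_sat \<sigma> c"
    using \<open>satisfiable phi\<close> unfolding satisfiable_def by blast
  have "legal (insert v C) (partner \<sigma> v)"
    if "partner \<sigma> ` C \<subseteq> C" "v \<notin> C" "legal C v" for C v
    using legal restricted_partner[OF that(1,2)] that(3) by (auto simp: unrestricted_def)
  moreover have "paired (partner \<sigma>) (board n) {} {}"
    by (simp add: paired_def)
  ultimately show ?thesis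
    unfolding avoider_wins_enforcer_first_def
    by (intro pairing_strategy_avoider_wins[where p = "partner \<sigma>"]
        paired_partner_avoids_losing_sets[OF _ sat] partner_neq)
      (auto simp: in_board_iff)
qed

subsection \<open>Enforcer's strategy for an unsatisfiable formula\<close>

definition balanced_position :: "nat \<Rightarrow> vtx set \<Rightarrow> vtx set \<Rightarrow> bool \<Rightarrow> bool" where
  "balanced_position n Av En t \<longleftrightarrow> Av \<union> En \<subseteq> board n \<and> Av \<inter> En = {} \<and>
     card En = card Av + (if t then 1 else 0)"

lemma balanced_position_avoider_move:
  assumes "balanced_position n Av En True" "v \<in> board n - (Av \<union> En)"
  shows "balanced_position n (insert v Av) En False"
proof -
  have "finite Av"
    using assms(1) unfolding balanced_position_def by (meson finite_board finite_subset le_supE)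
  with assms show ?thesis
    unfolding balanced_position_def by auto
qed

lemma balanced_position_enforcer_move:
  assumes "balanced_position n Av En False" "v \<in> board n - (Av \<union> En)"
  shows "balanced_position n Av (insert v En) True"
proof -
  have "finite En"
    using assms(1) unfolding balanced_position_def by (meson finite_board finite_subset le_supE)
  with assms show ?thesis
    unfolding balanced_position_def by auto
qed

definition settled :: "vtx set \<Rightarrow> vtx set \<Rightarrow> nat \<Rightarrow> bool" where
  "settled Av En i \<longleftrightarrow> A i \<in> En \<and> S i \<in> Av \<and> (Pos i \<in> Av \<or> Neg i \<in> Av)"

definition quiet :: "vtx set \<Rightarrow> vtx set \<Rightarrow> nat \<Rightarrow> bool" where
  "quiet Av En i \<longleftrightarrow> (box i \<subseteq> Av \<union> En \<and> settled Av En i) \<or> box i \<inter> (Av \<union> En) = {}"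

definition quiet_except :: "nat \<Rightarrow> vtx set \<Rightarrow> vtx set \<Rightarrow> nat \<Rightarrow> bool" where
  "quiet_except n Av En i \<longleftrightarrow> (\<forall>j<n. j \<noteq> i \<longrightarrow> quiet Av En j)"

lemma quiet_except_insert:
  assumes "quiet_except n Av En i" "idx v = i"
  shows "quiet_except n (insert v Av) En i" "quiet_except n Av (insert v En) i"
  using assms unfolding quiet_except_def quiet_def settled_def by (auto simp: in_box_iff)

definition only_a_claimed :: "vtx set \<Rightarrow> vtx set \<Rightarrow> nat \<Rightarrow> bool" where
  "only_a_claimed Av En i \<longleftrightarrow> A i \<in> En \<and> box i \<inter> (Av \<union> En) = {A i}"

definition all_quiet :: "nat \<Rightarrow> vtx set \<Rightarrow> vtx set \<Rightarrow> bool" where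
  "all_quiet n Av En \<longleftrightarrow> (\<forall>j<n. quiet Av En j)"

definition opened :: "nat \<Rightarrow> vtx set \<Rightarrow> vtx set \<Rightarrow> nat \<Rightarrow> bool" where
  "opened n Av En i \<longleftrightarrow> i < n \<and> quiet_except n Av En i \<and> only_a_claimed Av En i"

definition answered :: "nat \<Rightarrow> vtx set \<Rightarrow> vtx set \<Rightarrow> nat \<Rightarrow> vtx \<Rightarrow> bool" where
  "answered n Av En i w \<longleftrightarrow> i < n \<and> quiet_except n Av En i \<and>
     A i \<in> En \<and> w \<in> Av \<and> w \<noteq> A i \<and> box i \<inter> (Av \<union> En) = {A i, w}"

definition closing :: "nat \<Rightarrow> vtx set \<Rightarrow> vtx set \<Rightarrow> nat \<Rightarrow> vtx \<Rightarrow> bool" where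
  "closing n Av En i c \<longleftrightarrow> i < n \<and> quiet_except n Av En i \<and> box i - (Av \<union> En) = {c} \<and>
     settled (insert c Av) En i \<and> restricted (Av \<union> En) c \<and> 2 \<le> card (En \<inter> box i)"

definition ignored :: "nat \<Rightarrow> vtx set \<Rightarrow> vtx set \<Rightarrow> nat \<Rightarrow> bool" where
  "ignored n Av En i \<longleftrightarrow> i < n \<and> only_a_claimed Av En i"

definition pressed :: "nat \<Rightarrow> vtx set \<Rightarrow> vtx set \<Rightarrow> nat \<Rightarrow> bool" where
  "pressed n Av En i \<longleftrightarrow> i < n \<and> A i \<in> En \<and> Pos i \<in> En \<and> box i \<inter> (Av \<union> En) = {A i, Pos i}"

definition threatened :: "nat \<Rightarrow> vtx set \<Rightarrow> vtx set \<Rightarrow> nat \<Rightarrow> vtx \<Rightarrow> bool" where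
  "threatened n Av En i c \<longleftrightarrow> i < n \<and> c \<in> box i - (Av \<union> En) \<and> restricted (Av \<union> En) c \<and>
     2 \<le> card (En \<inter> box i)"

definition enforcer_triple :: "nat \<Rightarrow> vtx set \<Rightarrow> bool" where
  "enforcer_triple n En \<longleftrightarrow> (\<exists>i<n. 3 \<le> card (En \<inter> box i))"

text \<open>Enforcer's strategy moves between these states as follows:
  \<open>all_quiet \<rightarrow> opened \<rightarrow> answered \<rightarrow> closing \<rightarrow> all_quiet\<close> when Avoider keeps settling the box,
  \<open>opened \<rightarrow> ignored \<rightarrow> pressed \<rightarrow> threatened \<rightarrow> enforcer_triple\<close> when she plays elsewhere, and
  \<open>closing \<rightarrow> threatened\<close> when she does not take the last vertex of the box.\<close>

definition enforcer_invariant :: "nat \<Rightarrow> vtx set \<Rightarrow> vtx set \<Rightarrow> bool \<Rightarrow> bool" where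
  "enforcer_invariant n Av En t \<longleftrightarrow> balanced_position n Av En t \<and>
     (enforcer_triple n En
      \<or> t \<and> ((\<exists>i. opened n Av En i) \<or> (\<exists>i c. closing n Av En i c) \<or> (\<exists>i. pressed n Av En i))
      \<or> \<not> t \<and> (all_quiet n Av En \<or> (\<exists>i w. answered n Av En i w) \<or> (\<exists>i. ignored n Av En i)
               \<or> (\<exists>i c. threatened n Av En i c)))"

lemma opened_avoider_move:
  assumes "opened n Av En i" "v \<notin> Av \<union> En"
  shows "answered n (insert v Av) En i v \<or> ignored n (insert v Av) En i"
proof (cases "idx v = i")
  case True
  then have "v \<in> box i"
    by (simp add: in_box_iff)
  with assms True show ?thesis
    unfolding opened_def answered_def only_a_claimed_def by (auto intro: quiet_except_insert)
next
  case False
  with assms show ?thesis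
    unfolding opened_def ignored_def only_a_claimed_def by (auto simp: in_box_iff)
qed

lemma closing_avoider_move:
  assumes "closing n Av En i c" "v \<notin> Av \<union> En"
  shows "all_quiet n (insert v Av) En \<or> threatened n (insert v Av) En i c"
proof (cases "v = c")
  case True
  have "idx c = i"
    using assms(1) unfolding closing_def by (auto simp: in_box_iff)
  have "quiet (insert c Av) En j" if "j < n" for j
  proof (cases "j = i")
    case True
    then show ?thesis
      using assms(1) unfolding closing_def quiet_def by auto
  next
    case False
    then show ?thesis
      using assms(1) \<open>j < n\<close> quiet_except_insert(1)[OF _ \<open>idx c = i\<close>]
      unfolding closing_def quiet_except_def by blast
  qed
  with True show ?thesis
    unfolding all_quiet_def by blast
next
  case False
  with assms show ?thesis
    unfolding closing_def threatened_def by (auto intro: restricted_mono)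
qed

lemma pressed_avoider_move:
  assumes "pressed n Av En i" "v \<notin> Av \<union> En"
  shows "threatened n (insert v Av) En i (if v = Neg i then S i else Neg i)"
proof -
  have "{A i, Pos i} \<subseteq> En \<inter> box i"
    using assms(1) unfolding pressed_def by (auto simp: box_def)
  then have "card {A i, Pos i} \<le> card (En \<inter> box i)"
    by (intro card_mono) auto
  with assms show ?thesis
    unfolding pressed_def threatened_def restricted_def by (auto simp: box_def)
qed

lemma all_quiet_enforcer_move:
  assumes "all_quiet n Av En" "\<not> board n \<subseteq> Av \<union> En"
  shows "\<exists>v\<in>board n - (Av \<union> En). restricted (Av \<union> En) v \<and> (\<exists>j. opened n Av (insert v En) j)"
proof -
  obtain x where x: "x \<in> board n" "x \<notin> Av \<union> En"
    using assms(2) by blast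
  define j where "j = idx x"
  have "j < n"
    using x by (simp add: in_board_iff j_def)
  have "\<not> box j \<subseteq> Av \<union> En"
    using x by (auto simp: j_def in_box_iff)
  then have empty: "box j \<inter> (Av \<union> En) = {}"
    using assms(1) \<open>j < n\<close> unfolding all_quiet_def quiet_def by blast
  then have "A j \<notin> Av \<union> En"
    by (auto simp: box_def)
  moreover have "opened n Av (insert (A j) En) j"
    using assms(1) \<open>j < n\<close> empty quiet_except_insert(2)[of n Av En j "A j"]
    unfolding opened_def only_a_claimed_def all_quiet_def quiet_except_def
    by (auto simp: box_def)
  ultimately show ?thesis
    using \<open>j < n\<close> by (auto simp: in_board_iff restricted_def)
qed

lemma answered_enforcer_move:
  assumes "answered n Av En i w"
  shows "\<exists>v\<in>board n - (Av \<union> En). restricted (Av \<union> En) v \<and> (\<exists>c. closing n Av (insert v En) i c)"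
proof -
  \<comment> \<open>Enforcer takes a literal vertex that Avoider lacks, so that the last free vertex \<open>c\<close> of the
    box would settle it; \<open>w = S i\<close> only occurs in the unrestricted game.\<close>
  define r where "r = (if w = Pos i then Neg i else Pos i)"
  define c where "c = (if w = S i then Neg i else S i)"
  have i: "i < n" and claimed: "box i \<inter> (Av \<union> En) = {A i, w}"
    and "A i \<in> En" "w \<in> Av" "w \<noteq> A i" and quiet: "quiet_except n Av En i"
    using assms unfolding answered_def by blast+
  have "idx w = i"
    using claimed in_box_iff by blast
  with \<open>w \<noteq> A i\<close> have w: "w = S i \<or> w = Pos i \<or> w = Neg i"
    by (cases w) auto
  have r_free: "r \<in> board n - (Av \<union> En)"
    using i claimed w unfolding r_def by (auto simp: box_def in_board_iff)
  have "box i - (Av \<union> insert r En) = {c}"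
    using claimed w unfolding r_def c_def box_def by auto
  moreover have "settled (insert c Av) (insert r En) i"
    using \<open>A i \<in> En\<close> \<open>w \<in> Av\<close> w unfolding settled_def c_def by auto
  moreover have "restricted (Av \<union> insert r En) c"
    using \<open>A i \<in> En\<close> \<open>w \<in> Av\<close> w unfolding restricted_def r_def c_def by auto
  moreover have "{A i, r} \<subseteq> insert r En \<inter> box i"
    using \<open>A i \<in> En\<close> by (auto simp: box_def r_def)
  then have "card {A i, r} \<le> card (insert r En \<inter> box i)"
    by (intro card_mono) auto
  then have "2 \<le> card (insert r En \<inter> box i)"
    by (simp add: r_def)
  moreover have "quiet_except n Av (insert r En) i"
    using quiet by (rule quiet_except_insert) (simp add: r_def)
  ultimately have "closing n Av (insert r En) i c"
    using i unfolding closing_def by blast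
  moreover have "restricted (Av \<union> En) r"
    using \<open>A i \<in> En\<close> by (auto simp: restricted_def r_def)
  ultimately show ?thesis
    using r_free by blast
qed

lemma ignored_enforcer_move:
  assumes "ignored n Av En i"
  shows "\<exists>v\<in>board n - (Av \<union> En). restricted (Av \<union> En) v \<and> pressed n Av (insert v En) i"
proof -
  have "Pos i \<in> board n - (Av \<union> En)" "restricted (Av \<union> En) (Pos i)"
    "pressed n Av (insert (Pos i) En) i"
    using assms unfolding ignored_def only_a_claimed_def pressed_def restricted_def
    by (auto simp: box_def in_board_iff)
  then show ?thesis
    by blast
qed

lemma threatened_enforcer_move:
  assumes "threatened n Av En i c"
  shows "c \<in> board n - (Av \<union> En) \<and> restricted (Av \<union> En) c \<and> enforcer_triple n (insert c En)"
proof -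
  have "c \<notin> En" "insert c En \<inter> box i = insert c (En \<inter> box i)"
    using assms unfolding threatened_def by auto
  then have "card (insert c En \<inter> box i) = Suc (card (En \<inter> box i))"
    by simp
  with assms show ?thesis
    unfolding threatened_def enforcer_triple_def by (auto simp: in_box_iff in_board_iff)
qed

lemma enforcer_triple_insert: "enforcer_triple n En \<Longrightarrow> enforcer_triple n (insert v En)"
  unfolding enforcer_triple_def by (meson card_mono finite_Int finite_box Int_mono
      order.trans subset_insertI order_refl)

lemma box_not_claimed:
  assumes "box i \<inter> C \<subseteq> {a, b}"
  shows "\<not> box i \<subseteq> C"
proof
  assume "box i \<subseteq> C"
  with assms have "card (box i) \<le> card {a, b}"
    by (intro card_mono) auto
  also have "\<dots> \<le> 2"
    by (simp add: card_insert_le_m1)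
  finally show False
    by (simp add: card_box)
qed

lemma enforcer_invariant_full_board:
  assumes "enforcer_invariant n Av En t" "board n \<subseteq> Av \<union> En"
  shows "all_quiet n Av En \<or> enforcer_triple n En"
proof (rule ccontr)
  assume neither: "\<not> ?thesis"
  have box_claimed: "box i \<subseteq> Av \<union> En" if "i < n" for i
    using assms(2) that by (auto simp: board_def)
  consider (opened) i where "opened n Av En i" | (answered) i w where "answered n Av En i w"
    | (closing) i c where "closing n Av En i c" | (ignored) i where "ignored n Av En i"
    | (pressed) i where "pressed n Av En i" | (threatened) i c where "threatened n Av En i c"
    using assms(1) neither unfolding enforcer_invariant_def by blast
  then show False
  proof cases
    case opened
    then have "i < n" "box i \<inter> (Av \<union> En) \<subseteq> {A i, A i}"
      unfolding opened_def only_a_claimed_def by auto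
    then show ?thesis
      using box_claimed box_not_claimed by blast
  next
    case answered
    then have "i < n" "box i \<inter> (Av \<union> En) \<subseteq> {A i, w}"
      unfolding answered_def by auto
    then show ?thesis
      using box_claimed box_not_claimed by blast
  next
    case closing
    then have "i < n" "c \<in> box i - (Av \<union> En)"
      unfolding closing_def by auto
    then show ?thesis
      using box_claimed by blast
  next
    case ignored
    then have "i < n" "box i \<inter> (Av \<union> En) \<subseteq> {A i, A i}"
      unfolding ignored_def only_a_claimed_def by auto
    then show ?thesis
      using box_claimed box_not_claimed by blast
  next
    case pressed
    then have "i < n" "box i \<inter> (Av \<union> En) \<subseteq> {A i, Pos i}"
      unfolding pressed_def by auto
    then show ?thesis
      using box_claimed box_not_claimed by blast
  next
    case threatened
    then have "i < n" "c \<in> box i - (Av \<union> En)"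
      unfolding threatened_def by auto
    then show ?thesis
      using box_claimed by blast
  qed
qed

lemma exists_gt_of_sum_eq:
  fixes f :: "nat \<Rightarrow> nat"
  assumes "(\<Sum>j<n. f j) = k * n" "i < n" "f i < k"
  shows "\<exists>j<n. k < f j"
proof (rule ccontr)
  assume "\<not> ?thesis"
  then have le: "f j \<le> k" if "j < n" for j
    using that not_less by blast
  have "(\<Sum>j<n. f j) = f i + (\<Sum>j\<in>{..<n} - {i}. f j)"
    using assms(2) by (simp add: sum.remove)
  also have "\<dots> < k + (\<Sum>j\<in>{..<n} - {i}. k)"
    using assms(3) le by (intro add_less_le_mono sum_mono) auto
  also have "\<dots> = k * n"
    using assms(2) by (simp add: algebra_simps)
  finally show False
    using assms(1) by simp
qed

lemma enforcer_triple_full_board_loses: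
  assumes "balanced_position n Av En t" "board n \<subseteq> Av \<union> En" "enforcer_triple n En"
  shows "\<exists>f\<in>losing_sets n phi. f \<subseteq> Av"
proof -
  have sub: "Av \<subseteq> board n" "En \<subseteq> board n" and disj: "Av \<inter> En = {}"
    and count: "card En = card Av + (if t then 1 else 0)"
    using assms(1) unfolding balanced_position_def by auto
  then have "finite Av" "finite En"
    by (auto intro: finite_subset)
  moreover have "Av \<union> En = board n"
    using assms(2) sub by blast
  ultimately have "card Av + card En = 4 * n"
    using disj by (metis card_Un_disjoint card_board)
  with count have card_Av: "card Av = 2 * n"
    by (cases t) presburger+
  obtain i where "i < n" and "3 \<le> card (En \<inter> box i)"
    using assms(3) unfolding enforcer_triple_def by blast
  moreover have "card (Av \<inter> box i) + card (En \<inter> box i) \<le> card (box i)"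
  proof -
    have "card (Av \<inter> box i) + card (En \<inter> box i) = card (Av \<inter> box i \<union> En \<inter> box i)"
      using disj by (intro card_Un_disjoint[symmetric]) auto
    also have "\<dots> \<le> card (box i)"
      by (intro card_mono) auto
    finally show ?thesis .
  qed
  ultimately have "card (Av \<inter> box i) < 2"
    by (simp add: card_box)
  then have "\<exists>j<n. 2 < card (Av \<inter> box j)"
    using \<open>i < n\<close> card_eq_sum_card_box[OF sub(1)] card_Av
    by (intro exists_gt_of_sum_eq[where i = i]) simp_all
  then obtain j where "j < n" "3 \<le> card (Av \<inter> box j)"
    by (auto simp: Suc_le_eq)
  then obtain f where "f \<subseteq> Av \<inter> box j" "card f = 3"
    by (meson obtain_subset_with_card_n)
  with \<open>j < n\<close> show ?thesis
    unfolding losing_sets_def by blast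
qed

lemma all_quiet_full_board_loses:
  assumes "all_quiet n Av En" "board n \<subseteq> Av \<union> En" "wf_3sat n phi" "\<not> satisfiable phi"
  shows "\<exists>f\<in>losing_sets n phi. f \<subseteq> Av"
proof -
  have settled: "settled Av En j" if "j < n" for j
  proof -
    have "box j \<subseteq> Av \<union> En"
      using assms(2) that by (auto simp: board_def)
    moreover have "box j \<inter> (Av \<union> En) \<noteq> {}"
      using calculation by (auto simp: box_def)
    ultimately show ?thesis
      using assms(1) that unfolding all_quiet_def quiet_def by blast
  qed
  obtain c where c: "c \<in> set phi" "\<not> clause_sat (\<lambda>j. Pos j \<in> Av) c"
    using assms(4) unfolding satisfiable_def by blast
  obtain i bi j bj k bk where c_eq: "c = ((i,bi),(j,bj),(k,bk))"
    by (cases c) auto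
  have "i < n" "j < n" "k < n"
    using assms(3) c(1) unfolding wf_3sat_def c_eq by fastforce+
  then have "clause_set c \<subseteq> Av"
    using c(2) settled[of i] settled[of j] settled[of k] unfolding c_eq settled_def by auto
  moreover have "clause_set c \<in> losing_sets n phi"
    using c(1) unfolding losing_sets_def by blast
  ultimately show ?thesis
    by blast
qed

lemma enforcer_invariant_avoider_move:
  assumes "enforcer_invariant n Av En True" "v \<in> board n - (Av \<union> En)"
  shows "enforcer_invariant n (insert v Av) En False"
proof -
  have v: "v \<notin> Av \<union> En"
    using assms(2) by blast
  have "enforcer_triple n En \<or> (\<exists>i. opened n Av En i) \<or> (\<exists>i c. closing n Av En i c)
      \<or> (\<exists>i. pressed n Av En i)"
    using assms(1) unfolding enforcer_invariant_def by simp
  then have "enforcer_triple n En \<or> all_quiet n (insert v Av) En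
      \<or> (\<exists>i w. answered n (insert v Av) En i w) \<or> (\<exists>i. ignored n (insert v Av) En i)
      \<or> (\<exists>i c. threatened n (insert v Av) En i c)"
    using opened_avoider_move[OF _ v] closing_avoider_move[OF _ v] pressed_avoider_move[OF _ v]
    by blast
  moreover have "balanced_position n (insert v Av) En False"
    using assms balanced_position_avoider_move unfolding enforcer_invariant_def by blast
  ultimately show ?thesis
    unfolding enforcer_invariant_def by simp
qed

lemma enforcer_invariant_enforcer_move:
  assumes "enforcer_invariant n Av En False" "\<not> board n \<subseteq> Av \<union> En"
  shows "\<exists>v\<in>board n - (Av \<union> En). restricted (Av \<union> En) v \<and> enforcer_invariant n Av (insert v En) True"
proof -
  let ?good = "\<lambda>v. enforcer_triple n (insert v En) \<or> (\<exists>i. opened n Av (insert v En) i)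
       \<or> (\<exists>i c. closing n Av (insert v En) i c) \<or> (\<exists>i. pressed n Av (insert v En) i)"
  consider "enforcer_triple n En" | "all_quiet n Av En" | i w where "answered n Av En i w"
    | i where "ignored n Av En i" | i c where "threatened n Av En i c"
    using assms(1) unfolding enforcer_invariant_def by auto
  then have "\<exists>v\<in>board n - (Av \<union> En). restricted (Av \<union> En) v \<and> ?good v"
  proof cases
    case 1
    obtain x where "x \<in> board n - (Av \<union> En)"
      using assms(2) by blast
    then obtain v where "v \<in> board n - (Av \<union> En)" "restricted (Av \<union> En) v"
      using exists_restricted_move by blast
    with 1 show ?thesis
      using enforcer_triple_insert by blast
  next
    case 2
    then obtain v j where "v \<in> board n - (Av \<union> En)" "restricted (Av \<union> En) v"
        "opened n Av (insert v En) j"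
      using all_quiet_enforcer_move assms(2) by blast
    then show ?thesis
      by blast
  next
    case 3
    then obtain v c where "v \<in> board n - (Av \<union> En)" "restricted (Av \<union> En) v"
        "closing n Av (insert v En) i c"
      using answered_enforcer_move by blast
    then show ?thesis
      by blast
  next
    case 4
    then obtain v where "v \<in> board n - (Av \<union> En)" "restricted (Av \<union> En) v"
        "pressed n Av (insert v En) i"
      using ignored_enforcer_move by blast
    then show ?thesis
      by blast
  next
    case 5
    then have "c \<in> board n - (Av \<union> En)" "restricted (Av \<union> En) c"
        "enforcer_triple n (insert c En)"
      using threatened_enforcer_move by blast+
    then show ?thesis
      by blast
  qed
  then obtain v where "v \<in> board n - (Av \<union> En)" "restricted (Av \<union> En) v" "?good v"
    by blast
  moreover have "balanced_position n Av (insert v En) True"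
    using assms(1) calculation(1) balanced_position_enforcer_move
    unfolding enforcer_invariant_def by blast
  ultimately show ?thesis
    unfolding enforcer_invariant_def by auto
qed

lemma avoider_loses_if_unsatisfiable:
  assumes restricted_legal: "\<And>C v. restricted C v \<Longrightarrow> legal C v"
    and "wf_3sat n phi" "\<not> satisfiable phi"
  shows "\<not> avoider_wins_enforcer_first legal (board n) (losing_sets n phi)"
proof
  assume "avoider_wins_enforcer_first legal (board n) (losing_sets n phi)"
  then have wins: "avoider_wins legal (board n) (losing_sets n phi) {} {} False"
    unfolding avoider_wins_enforcer_first_def .
  have init: "enforcer_invariant n {} {} False"
    unfolding enforcer_invariant_def balanced_position_def all_quiet_def quiet_def by simp
  show False
  proof (rule invariant_strategy_avoider_loses[where I = "enforcer_invariant n", OF _ _ _ wins init])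
    fix Av En t
    assume inv: "enforcer_invariant n Av En t"
      and stuck: "\<not> (\<exists>v\<in>board n - (Av \<union> En). legal (Av \<union> En) v)"
    have full: "board n \<subseteq> Av \<union> En"
    proof (rule ccontr)
      assume "\<not> board n \<subseteq> Av \<union> En"
      then obtain x where "x \<in> board n - (Av \<union> En)"
        by blast
      then obtain w where "w \<in> board n - (Av \<union> En)" "restricted (Av \<union> En) w"
        using exists_restricted_move by blast
      with stuck restricted_legal show False
        by blast
    qed
    have "balanced_position n Av En t"
      using inv unfolding enforcer_invariant_def by blast
    with enforcer_invariant_full_board[OF inv full] show "\<exists>f\<in>losing_sets n phi. f \<subseteq> Av"
      using all_quiet_full_board_loses[OF _ full assms(2,3)] enforcer_triple_full_board_loses[OF _ full]
      by blast
  next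
    fix Av En
    assume "enforcer_invariant n Av En False" "\<exists>v\<in>board n - (Av \<union> En). legal (Av \<union> En) v"
    then show "\<exists>v\<in>board n - (Av \<union> En). legal (Av \<union> En) v \<and> enforcer_invariant n Av (insert v En) True"
      using enforcer_invariant_enforcer_move restricted_legal by blast
  qed (rule enforcer_invariant_avoider_move)
qed

lemma avoider_wins_enforcer_first_iff_satisfiable:
  assumes legal: "legal = restricted \<or> legal = unrestricted" and "wf_3sat n phi"
  shows "avoider_wins_enforcer_first legal (board n) (losing_sets n phi) \<longleftrightarrow> satisfiable phi"
proof -
  have "restricted C v \<Longrightarrow> legal C v" for C v
    using legal by (auto simp: unrestricted_def)
  then show ?thesis
    using avoider_wins_if_satisfiable[OF legal] avoider_loses_if_unsatisfiable[OF _ \<open>wf_3sat n phi\<close>]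
    by blast
qed

theorem lemma4:
  fixes n :: nat and phi :: "clause list"
  assumes "wf_3sat n phi"
  shows "avoider_wins_enforcer_first restricted (board n) (losing_sets n phi)
     \<longleftrightarrow> avoider_wins_enforcer_first unrestricted (board n) (losing_sets n phi)"
  using avoider_wins_enforcer_first_iff_satisfiable[OF _ assms] by blast

end
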